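(* Let $K$ be an algebraically closed field, let $Q$ be the quiver with vertex set $\omega$ and arrows $a_n:n+1\to n$ ($n\in\omega$), and let $M_{\omega_1}$ be the $KQ$-module defined in the context. Then $\mathrm{Ext}^1_{KQ}\big(M_{\omega_1},\bigoplus_{\omega_1}KQ\big)\neq0$, where $\bigoplus_{\omega_1}KQ$ is the direct sum of $\omega_1$ copies of $KQ$.
   Context: Paths in a quiver are composable sequences of arrows written left to right, with trivial paths $e_v$; the path algebra $KQ$ has basis all paths, product = concatenation when the target of the first equals the source of the second, else $0$. Modules are right modules. $\omega_1$ is the first uncountable ordinal, $\mathrm{Lim}$ the class of nonzero limit ordinals. Fix a ladder system: for each $\alpha\in\omega_1\cap\mathrm{Lim}$ a set $C_\alpha=\{\zeta^\alpha_n:n\in\omega\}$, strictly increasingly enumerated and cofinal in $\alpha$, such that each $\zeta^\alpha_n$ equals $\delta+n+1$ for some $\delta\in\alpha\cap(\{0\}\cup\mathrm{Lim})$. For $\gamma\in\omega_1\setminus(\{0\}\cup\mathrm{Lim})$ let $n_\gamma\in\omega$ be the unique integer with $\gamma=\delta+n_\gamma+1$ for some $\delta\in\{0\}\cup\mathrm{Lim}$. For $\xi<\omega_1$ let $F^\xi=KQ$ if $\xi\notin\mathrm{Lim}$ and $F^\xi=\bigoplus_{n\in\omega}KQ$ if $\xi\in\mathrm{Lim}$; let $F=\bigoplus_{\xi<\omega_1}F^\xi$ (finite-support functions, coordinatewise operations). For $\gamma\notin\mathrm{Lim}$ and a vertex $m$, $e^\gamma_m\in F$ has support $\{\gamma\}$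 and value $e_m$ there; for $\alpha\in\mathrm{Lim}$ and vertex $m$, $e^\alpha_m\in F$ has support $\{\alpha\}$ and value at $\alpha$ the element of $\bigoplus_{n}KQ$ with support $\{0\}$ and value $e_m$. Let $G_\alpha$ be the $KQ$-submodule of $F$ generated by $\{e^{\zeta^\alpha_n}_n-e^\alpha_n+e^\alpha_{n+1}a_n:n\in\omega\}$, let $I=\sum_{\alpha\in\omega_1\cap\mathrm{Lim}}G_\alpha$, and let $M_{\omega_1}$ be the $KQ$-submodule of $F/I$ generated by $\{e^\gamma_{n_\gamma}+I:\gamma\in\omega_1\setminus(\{0\}\cup\mathrm{Lim})\}\cup\{e^\alpha_n+I:\alpha\in\omega_1\cap\mathrm{Lim},n\in\omega\}$. *)

theory Defs
  imports Main "HOL-Library.Countable_Set" "HOL-Computational_Algebra.Polynomial"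
begin

text \<open>A path of Q is determined by its source s and target t with t <= s: it is the
  trivial path e_s if s = t and the composite a_(s-1) ... a_t otherwise. We encode the
  path by the pair (s,t). Elements of KQ are finitely supported K-valued functions on
  paths (zero on pairs (s,t) with s < t). Product of paths (s,t)(t',u) is (s,u) if t = t'
  and 0 otherwise.\<close>

type_synonym 'k kqel = "nat \<times> nat \<Rightarrow> 'k"

definition kq :: "'k::comm_ring_1 kqel \<Rightarrow> bool" where
  "kq x \<longleftrightarrow> finite {p. x p \<noteq> 0} \<and> (\<forall>s t. s < t \<longrightarrow> x (s,t) = 0)"

definition kq_mult :: "'k::comm_ring_1 kqel \<Rightarrow> 'k kqel \<Rightarrow> 'k kqel" where
  "kq_mult x y = (\<lambda>(s,u). \<Sum>t\<in>{u..s}. x (s,t) * y (t,u))"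

definition kq_e :: "nat \<Rightarrow> 'k::comm_ring_1 kqel" where
  "kq_e v = (\<lambda>p. if p = (v,v) then 1 else 0)"

definition kq_a :: "nat \<Rightarrow> 'k::comm_ring_1 kqel" where
  "kq_a n = (\<lambda>p. if p = (Suc n, n) then 1 else 0)"

definition kq_idem :: "nat set \<Rightarrow> 'k::comm_ring_1 kqel" where
  "kq_idem V = (\<lambda>p. if fst p = snd p \<and> fst p \<in> V then 1 else 0)"

record ('a,'k) kqmod =
  mcar :: "'a set"
  madd :: "'a \<Rightarrow> 'a \<Rightarrow> 'a"
  mzero :: "'a"
  mact :: "'a \<Rightarrow> 'k kqel \<Rightarrow> 'a"

text \<open>(Unitary) right KQ-module: abelian group with a right KQ-action, M KQ = M.\<close>
definition is_kqmod :: "('a,'k::comm_ring_1) kqmod \<Rightarrow> bool" where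
  "is_kqmod M \<longleftrightarrow>
     mzero M \<in> mcar M \<and>
     (\<forall>x\<in>mcar M. \<forall>y\<in>mcar M. madd M x y \<in> mcar M) \<and>
     (\<forall>x\<in>mcar M. \<forall>y\<in>mcar M. \<forall>z\<in>mcar M. madd M (madd M x y) z = madd M x (madd M y z)) \<and>
     (\<forall>x\<in>mcar M. \<forall>y\<in>mcar M. madd M x y = madd M y x) \<and>
     (\<forall>x\<in>mcar M. madd M (mzero M) x = x) \<and>
     (\<forall>x\<in>mcar M. \<exists>y\<in>mcar M. madd M x y = mzero M) \<and>
     (\<forall>x\<in>mcar M. \<forall>r. kq r \<longrightarrow> mact M x r \<in> mcar M) \<and>
     (\<forall>x\<in>mcar M. \<forall>y\<in>mcar M. \<forall>r. kq r \<longrightarrow>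
        mact M (madd M x y) r = madd M (mact M x r) (mact M y r)) \<and>
     (\<forall>x\<in>mcar M. \<forall>r s. kq r \<longrightarrow> kq s \<longrightarrow>
        mact M x (\<lambda>p. r p + s p) = madd M (mact M x r) (mact M x s)) \<and>
     (\<forall>x\<in>mcar M. \<forall>r s. kq r \<longrightarrow> kq s \<longrightarrow>
        mact M (mact M x r) s = mact M x (kq_mult r s)) \<and>
     (\<forall>x\<in>mcar M. \<exists>V. finite V \<and> mact M x (kq_idem V) = x)"

definition kq_hom :: "('a,'k::comm_ring_1) kqmod \<Rightarrow> ('b,'k) kqmod \<Rightarrow> ('a \<Rightarrow> 'b) \<Rightarrow> bool" where
  "kq_hom M M' f \<longleftrightarrow>
     f ` mcar M \<subseteq> mcar M' \<and>
     (\<forall>x\<in>mcar M. \<forall>y\<in>mcar M. f (madd M x y) = madd M' (f x) (f y)) \<and>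
     (\<forall>x\<in>mcar M. \<forall>r. kq r \<longrightarrow> f (mact M x r) = mact M' (f x) r)"

text \<open>Ext^1(M,N) is nonzero iff there is a non-split short exact sequence
  0 -> N -> E -> M -> 0. Every such E is isomorphic to one whose underlying set is a
  subset of N x M (via a set-theoretic section), so E is taken on the type 'b x 'a.\<close>
definition Ext1_nonzero :: "('a,'k::comm_ring_1) kqmod \<Rightarrow> ('b,'k) kqmod \<Rightarrow> bool" where
  "Ext1_nonzero M N \<longleftrightarrow>
     (\<exists>(E::('b \<times> 'a,'k) kqmod) i p.
        is_kqmod E \<and> kq_hom N E i \<and> inj_on i (mcar N) \<and>
        kq_hom E M p \<and> p ` mcar E = mcar M \<and>
        i ` mcar N = {x\<in>mcar E. p x = mzero M} \<and>
        \<not> (\<exists>s. kq_hom M E s \<and> (\<forall>m\<in>mcar M. p (s m) = m)))"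

inductive_set mspan :: "('a,'k::comm_ring_1) kqmod \<Rightarrow> 'a set \<Rightarrow> 'a set"
  for M :: "('a,'k) kqmod" and S :: "'a set" where
  gen: "s \<in> S \<Longrightarrow> s \<in> mspan M S"
| zero: "mzero M \<in> mspan M S"
| add: "x \<in> mspan M S \<Longrightarrow> y \<in> mspan M S \<Longrightarrow> madd M x y \<in> mspan M S"
| neg: "x \<in> mspan M S \<Longrightarrow> y \<in> mcar M \<Longrightarrow> madd M x y = mzero M \<Longrightarrow> y \<in> mspan M S"
| act: "x \<in> mspan M S \<Longrightarrow> kq r \<Longrightarrow> mact M x r \<in> mspan M S"

definition sub_mod :: "('a,'k::comm_ring_1) kqmod \<Rightarrow> 'a set \<Rightarrow> ('a,'k) kqmod" where
  "sub_mod M S = M\<lparr>mcar := mspan M S\<rparr>"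

definition coset :: "('a,'k) kqmod \<Rightarrow> 'a set \<Rightarrow> 'a \<Rightarrow> 'a set" where
  "coset M I x = {madd M x y | y. y \<in> I}"

definition quot_mod :: "('a,'k) kqmod \<Rightarrow> 'a set \<Rightarrow> ('a set,'k) kqmod" where
  "quot_mod M I =
     \<lparr>mcar = coset M I ` mcar M,
      madd = (\<lambda>A B. coset M I (madd M (SOME a. a \<in> A) (SOME b. b \<in> B))),
      mzero = coset M I (mzero M),
      mact = (\<lambda>A r. coset M I (mact M (SOME a. a \<in> A) r))\<rparr>"

text \<open>omega_1 is represented by a wellordered type 'w which is uncountable and all of whose
  proper initial segments are countable (this determines it up to isomorphism).\<close>

definition w0 :: "'w::wellorder" where "w0 = (LEAST x. True)"
definition w_succ :: "'w::wellorder \<Rightarrow> 'w" where "w_succ x = (LEAST y. x < y)"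
definition is_lim :: "'w::wellorder \<Rightarrow> bool" where
  "is_lim a \<longleftrightarrow> a \<noteq> w0 \<and> \<not> (\<exists>b. a = w_succ b)"
definition lim_or_zero :: "'w::wellorder \<Rightarrow> bool" where
  "lim_or_zero a \<longleftrightarrow> a = w0 \<or> is_lim a"

definition w_plus_succ :: "'w::wellorder \<Rightarrow> nat \<Rightarrow> 'w" where
  "w_plus_succ d n = (w_succ ^^ Suc n) d"

definition n_of :: "'w::wellorder \<Rightarrow> nat" where
  "n_of g = (THE n. \<exists>d. lim_or_zero d \<and> g = w_plus_succ d n)"

definition is_ladder :: "('w::wellorder \<Rightarrow> nat \<Rightarrow> 'w) \<Rightarrow> bool" where
  "is_ladder z \<longleftrightarrow> (\<forall>a. is_lim a \<longrightarrow>
      strict_mono (z a) \<and> (\<forall>n. z a n < a) \<and> (\<forall>b<a. \<exists>n. b \<le> z a n) \<and>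
      (\<forall>n. \<exists>d<a. lim_or_zero d \<and> z a n = w_plus_succ d n))"

text \<open>F = direct sum over xi of F^xi; an element is f xi n, the n-th KQ-coordinate at xi
  (for non-limit xi only n = 0 is used).\<close>
definition F_mod :: "('w::wellorder \<Rightarrow> nat \<Rightarrow> 'k::comm_ring_1 kqel, 'k) kqmod" where
  "F_mod = \<lparr>mcar = {f. finite {(xi,n). f xi n \<noteq> (\<lambda>_. 0)} \<and> (\<forall>xi n. kq (f xi n)) \<and>
                      (\<forall>xi n. \<not> is_lim xi \<and> n \<noteq> 0 \<longrightarrow> f xi n = (\<lambda>_. 0))},
            madd = (\<lambda>f g xi n p. f xi n p + g xi n p),
            mzero = (\<lambda>_ _ _. 0),
            mact = (\<lambda>f r xi n. kq_mult (f xi n) r)\<rparr>"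

definition eF :: "'w::wellorder \<Rightarrow> nat \<Rightarrow> 'w \<Rightarrow> nat \<Rightarrow> 'k::comm_ring_1 kqel" where
  "eF xi m = (\<lambda>xi' n. if xi' = xi \<and> n = 0 then kq_e m else (\<lambda>_. 0))"

definition rel_gen :: "('w::wellorder \<Rightarrow> nat \<Rightarrow> 'w) \<Rightarrow> 'w \<Rightarrow> nat \<Rightarrow> ('w \<Rightarrow> nat \<Rightarrow> 'k::comm_ring_1 kqel)" where
  "rel_gen z a n = (\<lambda>xi k p. eF (z a n) n xi k p - eF a n xi k p
                            + kq_mult (eF a (Suc n) xi k) (kq_a n) p)"

definition G_sub :: "('w::wellorder \<Rightarrow> nat \<Rightarrow> 'w) \<Rightarrow> 'w \<Rightarrow> ('w \<Rightarrow> nat \<Rightarrow> 'k::comm_ring_1 kqel) set" where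
  "G_sub z a = mspan F_mod (range (rel_gen z a))"

definition I_sub :: "('w::wellorder \<Rightarrow> nat \<Rightarrow> 'w) \<Rightarrow> ('w \<Rightarrow> nat \<Rightarrow> 'k::comm_ring_1 kqel) set" where
  "I_sub z = mspan F_mod (\<Union>a\<in>{a. is_lim a}. G_sub z a)"

definition M_omega1 :: "('w::wellorder \<Rightarrow> nat \<Rightarrow> 'w) \<Rightarrow> (('w \<Rightarrow> nat \<Rightarrow> 'k::comm_ring_1 kqel) set, 'k) kqmod" where
  "M_omega1 z = sub_mod (quot_mod F_mod (I_sub z))
     ({coset F_mod (I_sub z) (eF g (n_of g)) | g. g \<noteq> w0 \<and> \<not> is_lim g} \<union>
      {coset F_mod (I_sub z) (eF a n) | a n. is_lim a})"

definition DSum_KQ :: "('w \<Rightarrow> 'k::comm_ring_1 kqel, 'k) kqmod" where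
  "DSum_KQ = \<lparr>mcar = {g. finite {xi. g xi \<noteq> (\<lambda>_. 0)} \<and> (\<forall>xi. kq (g xi))},
             madd = (\<lambda>f g xi p. f xi p + g xi p),
             mzero = (\<lambda>_ _. 0),
             mact = (\<lambda>f r xi. kq_mult (f xi) r)\<rparr>"

end

(*
  Let U be the formal sum of all paths of Q, an element of the completion of KQ, and let
  H(f) have coordinate U f_(alpha,0) at each limit alpha and 0 elsewhere. Since
  U (a_n - e_n) = - e_n, H maps every generator of I, hence all of I, into
  N = the direct sum of omega_1 copies of KQ. Therefore
  E = {(x, f + I) : f + I in M_omega1, x - H(f) in N} is an extension of M_omega1 by N.
  Suppose s splits it. For successor gamma the first component of s(e^gamma_n + I) lies in N
  and so has finite support; a closure argument gives a limit alpha outside all these supports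
  with gamma < alpha. The relations at alpha then make the alpha-coordinates y_n of the first
  components of s(e^alpha_n + I) satisfy y_n = y_(n+1) a_n, so y_0 vanishes on every path
  ending at 0. But y_0 - U e_0 must lie in KQ, while U e_0 contains every path ending at 0.
*)
theory Submission
  imports Defs
begin

section \<open>The path algebra\<close>

lemma kq_mult_apply: "kq_mult x y (s,u) = (\<Sum>t\<in>{u..s}. x (s,t) * y (t,u))"
  by (simp add: kq_mult_def)

lemma kq_mult_assoc: "kq_mult (kq_mult x y) z = kq_mult x (kq_mult y z)"
proof (rule ext, clarify)
  fix s u
  let ?c = "\<lambda>t w. if t \<le> w then x (s,w) * y (w,t) * z (t,u) else 0"
  have "kq_mult (kq_mult x y) z (s,u) = (\<Sum>t\<in>{u..s}. \<Sum>w\<in>{t..s}. x (s,w) * y (w,t) * z (t,u))"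
    by (simp add: kq_mult_def sum_distrib_right)
  also have "\<dots> = (\<Sum>t\<in>{u..s}. \<Sum>w\<in>{u..s}. ?c t w)"
  proof (rule sum.cong[OF refl])
    fix t assume "t \<in> {u..s}"
    then have "{w \<in> {u..s}. t \<le> w} = {t..s}" by auto
    then show "(\<Sum>w\<in>{t..s}. x (s,w) * y (w,t) * z (t,u)) = (\<Sum>w\<in>{u..s}. ?c t w)"
      using sum.inter_filter[of "{u..s}" _ "\<lambda>w. t \<le> w"] by simp
  qed
  also have "\<dots> = (\<Sum>w\<in>{u..s}. \<Sum>t\<in>{u..s}. ?c t w)"
    by (rule sum.swap)
  also have "\<dots> = (\<Sum>w\<in>{u..s}. \<Sum>t\<in>{u..w}. x (s,w) * y (w,t) * z (t,u))"
  proof (rule sym, rule sum.cong[OF refl])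
    fix w assume "w \<in> {u..s}"
    then have "{t \<in> {u..s}. t \<le> w} = {u..w}" by auto
    then show "(\<Sum>t\<in>{u..w}. x (s,w) * y (w,t) * z (t,u)) = (\<Sum>t\<in>{u..s}. ?c t w)"
      using sum.inter_filter[of "{u..s}" _ "\<lambda>t. t \<le> w"] by simp
  qed
  also have "\<dots> = kq_mult x (kq_mult y z) (s,u)"
    by (simp add: kq_mult_def sum_distrib_left mult.assoc)
  finally show "kq_mult (kq_mult x y) z (s,u) = kq_mult x (kq_mult y z) (s,u)" .
qed

lemma kq_mult_add_left: "kq_mult (\<lambda>p. x p + y p) r = (\<lambda>p. kq_mult x r p + kq_mult y r p)"
  by (auto simp: kq_mult_def distrib_right sum.distrib)

lemma kq_mult_add_right: "kq_mult r (\<lambda>p. x p + y p) = (\<lambda>p. kq_mult r x p + kq_mult r y p)"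
  by (auto simp: kq_mult_def distrib_left sum.distrib)

lemma kq_mult_diff_left: "kq_mult (\<lambda>p. x p - y p) r = (\<lambda>p. kq_mult x r p - kq_mult y r p)"
  by (auto simp: kq_mult_def left_diff_distrib sum_subtractf)

lemma kq_mult_minus_right: "kq_mult r (\<lambda>p. - x p) = (\<lambda>p. - kq_mult r x p)"
  by (auto simp: kq_mult_def sum_negf)

lemma kq_mult_zero_left [simp]: "kq_mult (\<lambda>p. 0) r = (\<lambda>p. 0)"
  by (auto simp: kq_mult_def)

lemma kq_mult_zero_right [simp]: "kq_mult r (\<lambda>p. 0) = (\<lambda>p. 0)"
  by (auto simp: kq_mult_def)

lemma kq_zero [simp]: "kq (\<lambda>p. 0)"
  by (simp add: kq_def)

lemma kq_add: "kq x \<Longrightarrow> kq y \<Longrightarrow> kq (\<lambda>p. x p + y p)"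
  unfolding kq_def by (auto intro: finite_subset[of _ "{p. x p \<noteq> 0} \<union> {p. y p \<noteq> 0}"])

lemma kq_minus: "kq x \<Longrightarrow> kq (\<lambda>p. - x p)"
  unfolding kq_def by auto

lemma kq_kq_mult: assumes "kq x" "kq y" shows "kq (kq_mult x y)"
proof -
  let ?A = "{p. x p \<noteq> 0}" and ?B = "{p. y p \<noteq> 0}"
  have "{p. kq_mult x y p \<noteq> 0} \<subseteq> (\<lambda>(a,b). (fst a, snd b)) ` (?A \<times> ?B)"
  proof
    fix p assume "p \<in> {p. kq_mult x y p \<noteq> 0}"
    then obtain s u where p: "p = (s,u)" and "(\<Sum>t\<in>{u..s}. x (s,t) * y (t,u)) \<noteq> 0"
      by (cases p) (auto simp: kq_mult_def)
    then obtain t where "x (s,t) * y (t,u) \<noteq> 0" by (meson sum.neutral)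
    then show "p \<in> (\<lambda>(a,b). (fst a, snd b)) ` (?A \<times> ?B)"
      using p by (auto intro!: image_eqI[of _ _ "((s,t),(t,u))"])
  qed
  moreover have "finite ((\<lambda>(a,b). (fst a, snd b)) ` (?A \<times> ?B))"
    using assms by (auto simp: kq_def)
  ultimately show ?thesis
    by (auto simp: kq_def kq_mult_def intro: finite_subset)
qed

lemma kq_kq_e [simp]: "kq (kq_e v)"
  by (simp add: kq_def kq_e_def)

lemma kq_kq_a [simp]: "kq (kq_a n)"
  by (simp add: kq_def kq_a_def)

lemma kq_kq_idem: "finite V \<Longrightarrow> kq (kq_idem V)"
  unfolding kq_def kq_idem_def
  by (auto intro: finite_subset[of _ "(\<lambda>v. (v,v)) ` V"])

lemma kq_mult_a_apply:
  "kq_mult y (kq_a n) (s,u) = (if u = n \<and> Suc n \<le> s then y (s, Suc n) else 0)"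
proof -
  have "kq_mult y (kq_a n) (s,u) = (\<Sum>t\<in>{u..s}. if t = Suc n then (if u = n then y (s, Suc n) else 0) else 0)"
    unfolding kq_mult_apply by (rule sum.cong) (auto simp: kq_a_def)
  then show ?thesis by (auto simp: sum.delta)
qed

lemma kq_e_mult_a: "kq_mult (kq_e (Suc n)) (kq_a n) = kq_a n"
proof (rule ext, clarify)
  fix s u
  have "kq_mult (kq_e (Suc n)) (kq_a n) (s,u) = (if u = n \<and> Suc n \<le> s then kq_e (Suc n) (s, Suc n) else 0)"
    by (rule kq_mult_a_apply)
  then show "kq_mult (kq_e (Suc n)) (kq_a n) (s,u) = kq_a n (s,u)"
    by (auto simp: kq_e_def kq_a_def)
qed

lemma kq_mult_idem_right:
  assumes "kq y" and "\<And>s u. y (s,u) \<noteq> 0 \<Longrightarrow> u \<in> V"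
  shows "kq_mult y (kq_idem V) = y"
proof (rule ext, clarify)
  fix s u
  have "kq_mult y (kq_idem V) (s,u) = (\<Sum>t\<in>{u..s}. if t = u then (if u \<in> V then y (s,u) else 0) else 0)"
    unfolding kq_mult_apply by (rule sum.cong) (auto simp: kq_idem_def)
  then show "kq_mult y (kq_idem V) (s,u) = y (s,u)"
    using assms by (cases "u \<le> s") (auto simp: sum.delta kq_def not_le)
qed

lemma kq_targets_finite:
  assumes "kq x" shows "finite {u. \<exists>s. x (s,u) \<noteq> 0}"
proof -
  have "{u. \<exists>s. x (s,u) \<noteq> 0} \<subseteq> snd ` {p. x p \<noteq> 0}"
    by force
  then show ?thesis
    using assms unfolding kq_def by (meson finite_imageI finite_subset)
qed

text \<open>This element has infinite support: it lies in the completion of KQ, not in KQ.\<close>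

definition all_paths :: "'k::comm_ring_1 kqel" where
  "all_paths = (\<lambda>(s,t). if t \<le> s then 1 else 0)"

lemma all_paths_mult_apply: "kq_mult all_paths x (s,u) = (\<Sum>t\<in>{u..s}. x (t,u))"
  by (simp add: kq_mult_def all_paths_def)

lemma all_paths_mult_arrow_minus_e: "kq_mult all_paths (\<lambda>p. kq_a n p - kq_e n p) = (\<lambda>p. - kq_e n p)"
proof (rule ext, clarify)
  fix s u
  have "kq_mult all_paths (\<lambda>p. kq_a n p - kq_e n p) (s,u)
      = (\<Sum>t\<in>{u..s}. (if u = n \<and> t = Suc n then 1 else 0) - (if u = n \<and> t = n then 1 else 0))"
    unfolding all_paths_mult_apply by (rule sum.cong) (auto simp: kq_e_def kq_a_def)
  then show "kq_mult all_paths (\<lambda>p. kq_a n p - kq_e n p) (s,u) = - kq_e n (s,u)"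
    by (cases "u = n") (simp_all add: sum_subtractf kq_e_def)
qed

lemma not_kq_diff_all_paths_e0:
  assumes "\<And>s. x (s,0) = 0"
  shows "\<not> kq (\<lambda>p. x p - kq_mult all_paths (kq_e 0) p)"
proof
  assume "kq (\<lambda>p. x p - kq_mult all_paths (kq_e 0) p)"
  then have fin: "finite {p. x p - kq_mult all_paths (kq_e 0) p \<noteq> 0}"
    unfolding kq_def by blast
  have one: "kq_mult all_paths (kq_e 0) (s,0) = 1" for s
  proof -
    have "kq_mult all_paths (kq_e 0) (s,0) = (\<Sum>t\<in>{0..s}. if t = 0 then 1 else 0)"
      unfolding all_paths_mult_apply by (rule sum.cong) (auto simp: kq_e_def)
    then show ?thesis by (simp add: sum.delta)
  qed
  have "range (\<lambda>s::nat. (s, 0::nat)) \<subseteq> {p. x p - kq_mult all_paths (kq_e 0) p \<noteq> 0}"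
    using assms by (auto simp: one)
  then have "finite (range (\<lambda>s::nat. (s, 0::nat)))"
    using fin by (rule finite_subset)
  then show False
    using finite_imageD[of "\<lambda>s::nat. (s, 0::nat)" UNIV] by (simp add: inj_on_def)
qed

lemma arrow_divisible_vanishes:
  assumes "\<And>n. y n = kq_mult (y (Suc n)) (kq_a n)"
  shows "y n (s,n) = 0"
proof (induction "s - n" arbitrary: n rule: less_induct)
  case less
  show ?case
  proof (cases "Suc n \<le> s")
    case True
    then have "y n (s,n) = y (Suc n) (s, Suc n)"
      by (subst assms) (simp add: kq_mult_a_apply)
    also have "\<dots> = 0"
      using True by (intro less) auto
    finally show ?thesis .
  qed (subst assms, simp add: kq_mult_a_apply)
qed

section \<open>Closure points below omega_1\<close>

lemma countable_bounded_above:
  assumes unc: "uncountable (UNIV :: 'w::wellorder set)"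
    and cnt: "\<forall>x::'w. countable {y. y < x}"
    and X: "countable (X :: 'w set)"
  shows "\<exists>b. \<forall>x\<in>X. x < b"
proof (rule ccontr)
  assume "\<not> ?thesis"
  then have "UNIV \<subseteq> (\<Union>x\<in>X. {y. y < x} \<union> {x})"
    by (force simp: not_less le_less)
  moreover have "countable (\<Union>x\<in>X. {y. y < x} \<union> {x})"
    using X cnt by auto
  ultimately show False
    using unc countable_subset by blast
qed

lemma less_w_succ:
  assumes "uncountable (UNIV :: 'w::wellorder set)" and "\<forall>x::'w. countable {y. y < x}"
  shows "x < w_succ (x::'w)"
  using countable_bounded_above[OF assms, of "{x}"] unfolding w_succ_def
  by (auto intro: LeastI_ex)

lemma w_succ_least: "(x::'w::wellorder) < y \<Longrightarrow> w_succ x \<le> y"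
  unfolding w_succ_def by (rule Least_le)

lemma not_is_lim_w_plus_succ: "\<not> is_lim (w_plus_succ d n)"
  unfolding w_plus_succ_def is_lim_def funpow.simps comp_def by blast

lemma ladder_less:
  assumes "is_ladder z" "is_lim a" shows "z a n < a"
  using assms unfolding is_ladder_def by blast

lemma ladder_not_is_lim:
  assumes "is_ladder z" "is_lim a" shows "\<not> is_lim (z a n)"
  using assms not_is_lim_w_plus_succ unfolding is_ladder_def by metis

lemma lim_above_increasing_chain:
  fixes beta :: "nat \<Rightarrow> 'w::wellorder"
  assumes unc: "uncountable (UNIV :: 'w set)"
    and cnt: "\<forall>x::'w. countable {y. y < x}"
    and inc: "\<And>k. beta k < beta (Suc k)"
  obtains a where "is_lim a" "\<And>k. beta k < a" "\<And>g. g < a \<Longrightarrow> \<exists>k. g < beta k"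
proof
  have "\<exists>x. \<forall>k. beta k < x"
    using countable_bounded_above[OF unc cnt, of "range beta"] by auto
  define a where "a = (LEAST x. \<forall>k. beta k < x)"
  show above: "beta k < a" for k
    using LeastI_ex[OF \<open>\<exists>x. \<forall>k. beta k < x\<close>] unfolding a_def by blast
  show below: "\<exists>k. g < beta k" if "g < a" for g
  proof (rule ccontr)
    assume "\<not> ?thesis"
    then have "\<forall>k. beta k < g"
      using inc by (meson less_le_trans not_less)
    then have "a \<le> g"
      unfolding a_def by (rule Least_le)
    then show False using that by simp
  qed
  show "is_lim a"
    unfolding is_lim_def
  proof
    have "w0 \<le> beta 0"
      unfolding w0_def by (rule Least_le) simp
    then show "a \<noteq> w0"
      using above by (metis leD)
    show "\<not> (\<exists>b. a = w_succ b)"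
    proof
      assume "\<exists>b. a = w_succ b"
      then obtain b where ab: "a = w_succ b" by blast
      then obtain k where "b < beta k"
        using below less_w_succ[OF unc cnt] by blast
      then have "w_succ b \<le> beta k" by (rule w_succ_least)
      then show False using above ab by (metis leD)
    qed
  qed
qed

text \<open>The closure point is the supremum of the chain obtained by iterating
  b \<mapsto> a strict upper bound of the countable set T b.\<close>

lemma exists_lim_closure_point:
  fixes S :: "'w::wellorder \<Rightarrow> nat \<Rightarrow> 'w set"
  assumes unc: "uncountable (UNIV :: 'w set)"
    and cnt: "\<forall>x::'w. countable {y. y < x}"
    and fin: "\<And>g n. finite (S g n)"
  shows "\<exists>a. is_lim a \<and> (\<forall>g<a. \<forall>n. a \<notin> S g n)"
proof -
  define T where "T b = (\<Union>g\<in>{g. g < b}. \<Union>n. S g n)" for b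
  have "countable (T b)" for b
    unfolding T_def using cnt fin by (intro countable_UN) (auto intro: countable_finite)
  then have ex: "\<exists>c. b < c \<and> (\<forall>x\<in>T b. x < c)" for b
    using countable_bounded_above[OF unc cnt, of "insert b (T b)"] by auto
  define beta where "beta = rec_nat w0 (\<lambda>k b. SOME c. b < c \<and> (\<forall>x\<in>T b. x < c))"
  have beta_Suc: "beta (Suc k) = (SOME c. beta k < c \<and> (\<forall>x\<in>T (beta k). x < c))" for k
    by (simp add: beta_def)
  have beta_less: "beta k < beta (Suc k)" and T_less: "\<forall>x\<in>T (beta k). x < beta (Suc k)" for k
    using someI_ex[OF ex[of "beta k"]] unfolding beta_Suc[symmetric] by auto
  obtain a where a: "is_lim a" "\<And>k. beta k < a" "\<And>g. g < a \<Longrightarrow> \<exists>k. g < beta k"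
    using lim_above_increasing_chain[where beta=beta, OF unc cnt beta_less] by blast
  have "a \<notin> S g n" if "g < a" for g n
  proof
    assume "a \<in> S g n"
    moreover obtain k where "g < beta k" using a(3)[OF \<open>g < a\<close>] by blast
    ultimately have "a < beta (Suc k)"
      using T_less unfolding T_def by blast
    then show False using a(2) by (metis leD less_imp_le)
  qed
  then show ?thesis using a(1) by blast
qed

section \<open>The modules F and N\<close>

lemma mem_F_mod_iff: "f \<in> mcar (F_mod :: ('w::wellorder \<Rightarrow> nat \<Rightarrow> 'k::comm_ring_1 kqel, 'k) kqmod) \<longleftrightarrow>
   finite {(xi,n). f xi n \<noteq> (\<lambda>_. 0)} \<and> (\<forall>xi n. kq (f xi n)) \<and>
   (\<forall>xi n. \<not> is_lim xi \<and> n \<noteq> 0 \<longrightarrow> f xi n = (\<lambda>_. 0))"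
  by (simp add: F_mod_def)

lemma F_mod_ops [simp]:
  "madd F_mod = (\<lambda>f g xi n p. f xi n p + g xi n p)"
  "mzero F_mod = (\<lambda>_ _ _. 0)"
  "mact F_mod = (\<lambda>f r xi n. kq_mult (f xi n) r)"
  by (simp_all add: F_mod_def)

lemma F_mod_zero_mem: "(\<lambda>_ _ _. 0) \<in> mcar F_mod"
  unfolding mem_F_mod_iff by simp

lemma F_mod_add_mem:
  assumes "f \<in> mcar F_mod" "g \<in> mcar F_mod"
  shows "(\<lambda>xi n p. f xi n p + g xi n p) \<in> mcar F_mod"
proof -
  have "{(xi,n). (\<lambda>p. f xi n p + g xi n p) \<noteq> (\<lambda>_. 0)}
      \<subseteq> {(xi,n). f xi n \<noteq> (\<lambda>_. 0)} \<union> {(xi,n). g xi n \<noteq> (\<lambda>_. 0)}"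
    by auto
  then show ?thesis
    using assms unfolding mem_F_mod_iff by (auto intro: finite_subset kq_add)
qed

lemma F_mod_minus_mem:
  assumes "f \<in> mcar F_mod" shows "(\<lambda>xi n p. - f xi n p) \<in> mcar F_mod"
proof -
  have "{(xi,n). (\<lambda>p. - f xi n p) \<noteq> (\<lambda>_. 0)} = {(xi,n). f xi n \<noteq> (\<lambda>_. 0)}"
    by (auto simp: fun_eq_iff)
  then show ?thesis
    using assms unfolding mem_F_mod_iff by (auto intro: kq_minus)
qed

lemma F_mod_act_mem:
  assumes "f \<in> mcar F_mod" "kq r" shows "(\<lambda>xi n. kq_mult (f xi n) r) \<in> mcar F_mod"
proof -
  have "{(xi,n). kq_mult (f xi n) r \<noteq> (\<lambda>_. 0)} \<subseteq> {(xi,n). f xi n \<noteq> (\<lambda>_. 0)}"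
    by auto
  then show ?thesis
    using assms unfolding mem_F_mod_iff by (auto intro: finite_subset kq_kq_mult)
qed

lemma eF_mem_F_mod: "eF xi m \<in> mcar F_mod"
proof -
  have "{(xi',n). eF xi m xi' n \<noteq> (\<lambda>_. 0)} \<subseteq> {(xi,0)}"
    by (auto simp: eF_def)
  then show ?thesis
    unfolding mem_F_mod_iff by (auto intro: finite_subset simp: eF_def)
qed

lemma F_mod_targets_finite:
  assumes "f \<in> mcar F_mod"
  shows "finite {u. \<exists>xi n s. f xi n (s,u) \<noteq> 0}"
proof -
  let ?S = "{(xi,n). f xi n \<noteq> (\<lambda>_. 0)}"
  have "{u. \<exists>xi n s. f xi n (s,u) \<noteq> 0} \<subseteq> (\<Union>q\<in>?S. {u. \<exists>s. f (fst q) (snd q) (s,u) \<noteq> 0})"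
  proof
    fix u assume "u \<in> {u. \<exists>xi n s. f xi n (s,u) \<noteq> 0}"
    then obtain xi n s where "f xi n (s,u) \<noteq> 0" by blast
    then have "(xi,n) \<in> ?S" "u \<in> {u. \<exists>s. f xi n (s,u) \<noteq> 0}" by auto
    then show "u \<in> (\<Union>q\<in>?S. {u. \<exists>s. f (fst q) (snd q) (s,u) \<noteq> 0})" by force
  qed
  moreover have "finite (\<Union>q\<in>?S. {u. \<exists>s. f (fst q) (snd q) (s,u) \<noteq> 0})"
    using assms kq_targets_finite unfolding mem_F_mod_iff by blast
  ultimately show ?thesis by (rule finite_subset)
qed

lemma mem_DSum_KQ_iff: "g \<in> mcar (DSum_KQ :: ('w \<Rightarrow> 'k::comm_ring_1 kqel, 'k) kqmod) \<longleftrightarrow>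
   finite {xi. g xi \<noteq> (\<lambda>_. 0)} \<and> (\<forall>xi. kq (g xi))"
  by (simp add: DSum_KQ_def)

lemma DSum_KQ_ops [simp]:
  "madd DSum_KQ = (\<lambda>f g xi p. f xi p + g xi p)"
  "mzero DSum_KQ = (\<lambda>_ _. 0)"
  "mact DSum_KQ = (\<lambda>f r xi. kq_mult (f xi) r)"
  by (simp_all add: DSum_KQ_def)

lemma DSum_KQ_zero_mem: "(\<lambda>_ _. 0) \<in> mcar DSum_KQ"
  unfolding mem_DSum_KQ_iff by simp

lemma DSum_KQ_add_mem:
  assumes "f \<in> mcar DSum_KQ" "g \<in> mcar DSum_KQ"
  shows "(\<lambda>xi p. f xi p + g xi p) \<in> mcar DSum_KQ"
proof -
  have "{xi. (\<lambda>p. f xi p + g xi p) \<noteq> (\<lambda>_. 0)} \<subseteq> {xi. f xi \<noteq> (\<lambda>_. 0)} \<union> {xi. g xi \<noteq> (\<lambda>_. 0)}"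
    by auto
  then show ?thesis
    using assms unfolding mem_DSum_KQ_iff by (auto intro: finite_subset kq_add)
qed

lemma DSum_KQ_minus_mem:
  assumes "f \<in> mcar DSum_KQ" shows "(\<lambda>xi p. - f xi p) \<in> mcar DSum_KQ"
proof -
  have "{xi. (\<lambda>p. - f xi p) \<noteq> (\<lambda>_. 0)} = {xi. f xi \<noteq> (\<lambda>_. 0)}"
    by (auto simp: fun_eq_iff)
  then show ?thesis
    using assms unfolding mem_DSum_KQ_iff by (auto intro: kq_minus)
qed

lemma DSum_KQ_diff_mem:
  "f \<in> mcar DSum_KQ \<Longrightarrow> g \<in> mcar DSum_KQ \<Longrightarrow> (\<lambda>xi p. f xi p - g xi p) \<in> mcar DSum_KQ"
  using DSum_KQ_add_mem[OF _ DSum_KQ_minus_mem, of f g] by simp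

lemma DSum_KQ_act_mem:
  assumes "f \<in> mcar DSum_KQ" "kq r" shows "(\<lambda>xi. kq_mult (f xi) r) \<in> mcar DSum_KQ"
proof -
  have "{xi. kq_mult (f xi) r \<noteq> (\<lambda>_. 0)} \<subseteq> {xi. f xi \<noteq> (\<lambda>_. 0)}"
    by auto
  then show ?thesis
    using assms unfolding mem_DSum_KQ_iff by (auto intro: finite_subset kq_kq_mult)
qed

lemma DSum_KQ_targets_finite:
  assumes "d \<in> mcar DSum_KQ"
  shows "finite {u. \<exists>xi s. d xi (s,u) \<noteq> 0}"
proof -
  let ?S = "{xi. d xi \<noteq> (\<lambda>_. 0)}"
  have "{u. \<exists>xi s. d xi (s,u) \<noteq> 0} \<subseteq> (\<Union>xi\<in>?S. {u. \<exists>s. d xi (s,u) \<noteq> 0})"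
  proof
    fix u assume "u \<in> {u. \<exists>xi s. d xi (s,u) \<noteq> 0}"
    then obtain xi s where "d xi (s,u) \<noteq> 0" by blast
    then have "xi \<in> ?S" "u \<in> {u. \<exists>s. d xi (s,u) \<noteq> 0}" by auto
    then show "u \<in> (\<Union>xi\<in>?S. {u. \<exists>s. d xi (s,u) \<noteq> 0})" by blast
  qed
  moreover have "finite (\<Union>xi\<in>?S. {u. \<exists>s. d xi (s,u) \<noteq> 0})"
    using assms kq_targets_finite unfolding mem_DSum_KQ_iff by blast
  ultimately show ?thesis by (rule finite_subset)
qed

lemma mspan_F_mod_subsetI:
  assumes "S \<subseteq> P" and "(\<lambda>_ _ _. 0) \<in> P"
    and "\<And>f g. f \<in> P \<Longrightarrow> g \<in> P \<Longrightarrow> (\<lambda>xi n p. f xi n p + g xi n p) \<in> P"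
    and "\<And>f. f \<in> P \<Longrightarrow> (\<lambda>xi n p. - f xi n p) \<in> P"
    and "\<And>f r. f \<in> P \<Longrightarrow> kq r \<Longrightarrow> (\<lambda>xi n. kq_mult (f xi n) r) \<in> P"
  shows "mspan F_mod S \<subseteq> P"
proof
  fix x assume "x \<in> mspan F_mod S"
  then show "x \<in> P"
  proof (induction rule: mspan.induct)
    case (neg x y)
    have "y = (\<lambda>xi n p. - x xi n p)"
    proof (intro ext)
      fix xi n p
      have "x xi n p + y xi n p = 0"
        using fun_cong[OF fun_cong[OF fun_cong[OF neg.hyps(3)]], of xi n p] by simp
      then show "y xi n p = - x xi n p"
        by (simp add: eq_neg_iff_add_eq_0 add.commute)
    qed
    then show ?case using neg.IH assms(4) by simp
  qed (use assms in auto)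
qed

lemma mspan_F_mod_subset: "S \<subseteq> mcar F_mod \<Longrightarrow> mspan F_mod S \<subseteq> mcar F_mod"
  by (rule mspan_F_mod_subsetI)
    (auto intro: F_mod_zero_mem F_mod_add_mem F_mod_minus_mem F_mod_act_mem)

lemma rel_gen_mem_F_mod: "rel_gen z a n \<in> mcar F_mod"
proof -
  have eq: "rel_gen z a n = (\<lambda>xi k p. (\<lambda>xi k p. eF (z a n) n xi k p + (\<lambda>xi k p. - eF a n xi k p) xi k p) xi k p
      + (\<lambda>xi k. kq_mult (eF a (Suc n) xi k) (kq_a n)) xi k p)"
    by (simp add: rel_gen_def fun_eq_iff)
  show ?thesis
    unfolding eq by (intro F_mod_add_mem F_mod_minus_mem F_mod_act_mem eF_mem_F_mod kq_kq_a)
qed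

section \<open>The map H\<close>

definition H_map :: "('w::wellorder \<Rightarrow> nat \<Rightarrow> 'k::comm_ring_1 kqel) \<Rightarrow> 'w \<Rightarrow> 'k kqel" where
  "H_map f = (\<lambda>xi. if is_lim xi then kq_mult all_paths (f xi 0) else (\<lambda>_. 0))"

lemma H_map_add: "H_map (\<lambda>xi n p. f xi n p + g xi n p) = (\<lambda>xi p. H_map f xi p + H_map g xi p)"
  by (auto simp: H_map_def kq_mult_add_right fun_eq_iff)

lemma H_map_minus: "H_map (\<lambda>xi n p. - f xi n p) = (\<lambda>xi p. - H_map f xi p)"
  by (auto simp: H_map_def kq_mult_minus_right fun_eq_iff)

lemma H_map_zero: "H_map (\<lambda>_ _ _. 0) = (\<lambda>_ _. 0)"
  by (auto simp: H_map_def fun_eq_iff)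

lemma H_map_act: "H_map (\<lambda>xi n. kq_mult (f xi n) r) = (\<lambda>xi. kq_mult (H_map f xi) r)"
  by (auto simp: H_map_def kq_mult_assoc fun_eq_iff)

lemma H_map_eF_not_lim: "\<not> is_lim g \<Longrightarrow> H_map (eF g n) = (\<lambda>_ _. 0)"
  by (auto simp: H_map_def eF_def fun_eq_iff)

lemma H_map_eF_lim: "is_lim a \<Longrightarrow> H_map (eF a n) a = kq_mult all_paths (kq_e n)"
  by (simp add: H_map_def eF_def)

lemma H_map_rel_gen:
  assumes "is_lim a" "\<not> is_lim (z a n)"
  shows "H_map (rel_gen z a n) = (\<lambda>xi. if xi = a then (\<lambda>p. - kq_e n p) else (\<lambda>_. 0))"
proof
  fix xi
  show "H_map (rel_gen z a n) xi = (if xi = a then (\<lambda>p. - kq_e n p) else (\<lambda>_. 0))"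
  proof (cases "is_lim xi")
    case True
    then have "xi \<noteq> z a n" using assms by auto
    then have rel: "rel_gen z a n xi 0 = (if xi = a then (\<lambda>p. kq_a n p - kq_e n p) else (\<lambda>_. 0))"
      by (simp add: rel_gen_def eF_def kq_e_mult_a fun_eq_iff)
    have "H_map (rel_gen z a n) xi = kq_mult all_paths (rel_gen z a n xi 0)"
      using True by (simp add: H_map_def)
    also have "\<dots> = (if xi = a then (\<lambda>p. - kq_e n p) else (\<lambda>_. 0))"
      unfolding rel by (simp add: all_paths_mult_arrow_minus_e)
    finally show ?thesis .
  qed (use assms in \<open>auto simp: H_map_def\<close>)
qed

definition H_finite :: "('w::wellorder \<Rightarrow> nat \<Rightarrow> 'k::comm_ring_1 kqel) set" where
  "H_finite = {f \<in> mcar F_mod. H_map f \<in> mcar DSum_KQ}"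

lemma mspan_H_finite: "S \<subseteq> H_finite \<Longrightarrow> mspan F_mod S \<subseteq> H_finite"
  by (rule mspan_F_mod_subsetI)
    (auto simp: H_finite_def H_map_zero H_map_add H_map_minus H_map_act
      intro: F_mod_zero_mem F_mod_add_mem F_mod_minus_mem F_mod_act_mem
        DSum_KQ_zero_mem DSum_KQ_add_mem DSum_KQ_minus_mem DSum_KQ_act_mem)

lemma rel_gen_H_finite:
  assumes "is_lim a" "\<not> is_lim (z a n)"
  shows "rel_gen z a n \<in> H_finite"
proof -
  have "{xi. (if xi = a then (\<lambda>p. - kq_e n p) else (\<lambda>_. 0)) \<noteq> (\<lambda>_. 0)} \<subseteq> {a}"
    by auto
  then have "(\<lambda>xi. if xi = a then (\<lambda>p. - kq_e n p) else (\<lambda>_. 0)) \<in> mcar DSum_KQ"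
    unfolding mem_DSum_KQ_iff by (auto intro: kq_minus finite_subset)
  then have "H_map (rel_gen z a n) \<in> mcar DSum_KQ"
    unfolding H_map_rel_gen[where z=z and a=a and n=n, OF assms] .
  then show ?thesis
    unfolding H_finite_def using rel_gen_mem_F_mod by blast
qed

lemma I_sub_H_finite:
  assumes "is_ladder z"
  shows "I_sub z \<subseteq> H_finite"
proof -
  have "G_sub z a \<subseteq> H_finite" if "is_lim a" for a
  proof -
    have "range (rel_gen z a) \<subseteq> H_finite"
      using rel_gen_H_finite[where z=z, OF that ladder_not_is_lim[OF assms that]] by blast
    then show ?thesis
      unfolding G_sub_def by (rule mspan_H_finite)
  qed
  then have "(\<Union>a\<in>{a. is_lim a}. G_sub z a) \<subseteq> H_finite"
    by blast
  then show ?thesis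
    unfolding I_sub_def by (rule mspan_H_finite)
qed

section \<open>The quotient F/I and the module M_omega1\<close>

lemma I_sub_F_mod: "I_sub z \<subseteq> mcar F_mod"
proof -
  have "G_sub z a \<subseteq> mcar F_mod" for a
    unfolding G_sub_def using rel_gen_mem_F_mod by (intro mspan_F_mod_subset) blast
  then show ?thesis
    unfolding I_sub_def by (intro mspan_F_mod_subset) blast
qed

lemma I_sub_zero: "(\<lambda>_ _ _. 0) \<in> I_sub z"
  using mspan.zero[of F_mod] unfolding I_sub_def by simp

lemma I_sub_add: "x \<in> I_sub z \<Longrightarrow> y \<in> I_sub z \<Longrightarrow> (\<lambda>xi n p. x xi n p + y xi n p) \<in> I_sub z"
  using mspan.add[of x F_mod _ y] unfolding I_sub_def by simp

lemma I_sub_minus: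
  assumes "x \<in> I_sub z" shows "(\<lambda>xi n p. - x xi n p) \<in> I_sub z"
proof -
  have "(\<lambda>xi n p. - x xi n p) \<in> mcar F_mod"
    using assms I_sub_F_mod by (blast intro: F_mod_minus_mem)
  moreover have "madd F_mod x (\<lambda>xi n p. - x xi n p) = mzero F_mod"
    by simp
  ultimately show ?thesis
    using assms mspan.neg[of x F_mod] unfolding I_sub_def by blast
qed

lemma I_sub_act: "x \<in> I_sub z \<Longrightarrow> kq r \<Longrightarrow> (\<lambda>xi n. kq_mult (x xi n) r) \<in> I_sub z"
  using mspan.act[of x F_mod _ r] unfolding I_sub_def by simp

lemma rel_gen_mem_I_sub: "is_lim a \<Longrightarrow> rel_gen z a n \<in> I_sub z"
  unfolding I_sub_def G_sub_def by (blast intro: mspan.gen)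

abbreviation cls :: "('w::wellorder \<Rightarrow> nat \<Rightarrow> 'w) \<Rightarrow> ('w \<Rightarrow> nat \<Rightarrow> 'k::comm_ring_1 kqel)
    \<Rightarrow> ('w \<Rightarrow> nat \<Rightarrow> 'k kqel) set" where
  "cls z f \<equiv> coset F_mod (I_sub z) f"

lemma mem_cls_iff: "x \<in> cls z f \<longleftrightarrow> (\<exists>y\<in>I_sub z. x = (\<lambda>xi n p. f xi n p + y xi n p))"
  by (auto simp: coset_def)

lemma mem_cls_self: "f \<in> cls z f"
  unfolding mem_cls_iff by (rule bexI[OF _ I_sub_zero]) simp

lemma cls_add_I_sub:
  assumes "d \<in> I_sub z"
  shows "cls z (\<lambda>xi n p. f xi n p + d xi n p) = cls z f"
proof (rule set_eqI)
  fix x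
  have "(\<exists>y\<in>I_sub z. x = (\<lambda>xi n p. f xi n p + d xi n p + y xi n p))
      \<longleftrightarrow> (\<exists>y\<in>I_sub z. x = (\<lambda>xi n p. f xi n p + y xi n p))"
  proof
    assume "\<exists>y\<in>I_sub z. x = (\<lambda>xi n p. f xi n p + d xi n p + y xi n p)"
    then obtain y where y: "y \<in> I_sub z" "x = (\<lambda>xi n p. f xi n p + d xi n p + y xi n p)"
      by blast
    from y(2) have "x = (\<lambda>xi n p. f xi n p + (d xi n p + y xi n p))"
      by (simp only: add.assoc)
    then show "\<exists>y\<in>I_sub z. x = (\<lambda>xi n p. f xi n p + y xi n p)"
      using I_sub_add[OF assms y(1)] by (rule bexI)
  next
    assume "\<exists>y\<in>I_sub z. x = (\<lambda>xi n p. f xi n p + y xi n p)"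
    then obtain y where y: "y \<in> I_sub z" "x = (\<lambda>xi n p. f xi n p + y xi n p)"
      by blast
    from y(2) have "x = (\<lambda>xi n p. f xi n p + d xi n p + (- d xi n p + y xi n p))"
      by (simp only: add.assoc add_minus_cancel)
    then show "\<exists>y\<in>I_sub z. x = (\<lambda>xi n p. f xi n p + d xi n p + y xi n p)"
      using I_sub_add[OF I_sub_minus[OF assms] y(1)] by (rule bexI)
  qed
  then show "x \<in> cls z (\<lambda>xi n p. f xi n p + d xi n p) \<longleftrightarrow> x \<in> cls z f"
    unfolding mem_cls_iff .
qed

lemma cls_eqD:
  assumes "cls z f = cls z g" shows "\<exists>y\<in>I_sub z. g = (\<lambda>xi n p. f xi n p + y xi n p)"
  using mem_cls_self[of g z] unfolding assms[symmetric] mem_cls_iff .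

lemma quot_mod_I_sub_ops:
  "madd (quot_mod F_mod (I_sub z)) (cls z f) (cls z g) = cls z (\<lambda>xi n p. f xi n p + g xi n p)"
  "mzero (quot_mod F_mod (I_sub z)) = cls z (\<lambda>_ _ _. 0)"
  "kq r \<Longrightarrow> mact (quot_mod F_mod (I_sub z)) (cls z f) r = cls z (\<lambda>xi n. kq_mult (f xi n) r)"
proof -
  obtain y where y: "y \<in> I_sub z" "(SOME a. a \<in> cls z f) = (\<lambda>xi n p. f xi n p + y xi n p)"
    using someI[of "\<lambda>a. a \<in> cls z f", OF mem_cls_self] unfolding mem_cls_iff by blast
  obtain y' where y': "y' \<in> I_sub z" "(SOME a. a \<in> cls z g) = (\<lambda>xi n p. g xi n p + y' xi n p)"
    using someI[of "\<lambda>a. a \<in> cls z g", OF mem_cls_self] unfolding mem_cls_iff by blast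
  have "madd (quot_mod F_mod (I_sub z)) (cls z f) (cls z g)
     = cls z (\<lambda>xi n p. (\<lambda>xi n p. f xi n p + g xi n p) xi n p + (\<lambda>xi n p. y xi n p + y' xi n p) xi n p)"
    by (simp add: quot_mod_def y y' add_ac)
  also have "\<dots> = cls z (\<lambda>xi n p. f xi n p + g xi n p)"
    by (rule cls_add_I_sub[OF I_sub_add[OF y(1) y'(1)]])
  finally show "madd (quot_mod F_mod (I_sub z)) (cls z f) (cls z g) = cls z (\<lambda>xi n p. f xi n p + g xi n p)" .
  show "mzero (quot_mod F_mod (I_sub z)) = cls z (\<lambda>_ _ _. 0)"
    by (simp add: quot_mod_def)
  assume r: "kq r"
  have "mact (quot_mod F_mod (I_sub z)) (cls z f) r
     = cls z (\<lambda>xi n p. (\<lambda>xi n. kq_mult (f xi n) r) xi n p + (\<lambda>xi n. kq_mult (y xi n) r) xi n p)"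
    by (simp add: quot_mod_def y kq_mult_add_left)
  also have "\<dots> = cls z (\<lambda>xi n. kq_mult (f xi n) r)"
    by (rule cls_add_I_sub[OF I_sub_act[OF y(1) r]])
  finally show "mact (quot_mod F_mod (I_sub z)) (cls z f) r = cls z (\<lambda>xi n. kq_mult (f xi n) r)" .
qed

lemma M_omega1_ops:
  "madd (M_omega1 z) = madd (quot_mod F_mod (I_sub z))"
  "mzero (M_omega1 z) = mzero (quot_mod F_mod (I_sub z))"
  "mact (M_omega1 z) = mact (quot_mod F_mod (I_sub z))"
  by (simp_all add: M_omega1_def sub_mod_def)

lemma M_omega1_add: "madd (M_omega1 z) (cls z f) (cls z g) = cls z (\<lambda>xi n p. f xi n p + g xi n p)"
  by (simp add: M_omega1_ops quot_mod_I_sub_ops)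

lemma M_omega1_zero: "mzero (M_omega1 z) = cls z (\<lambda>_ _ _. 0)"
  by (simp add: M_omega1_ops quot_mod_I_sub_ops)

lemma M_omega1_act: "kq r \<Longrightarrow> mact (M_omega1 z) (cls z f) r = cls z (\<lambda>xi n. kq_mult (f xi n) r)"
  by (simp add: M_omega1_ops quot_mod_I_sub_ops)

lemma M_omega1_car: "mcar (M_omega1 z) = mspan (quot_mod F_mod (I_sub z))
     ({cls z (eF g (n_of g)) | g. g \<noteq> w0 \<and> \<not> is_lim g} \<union> {cls z (eF a n) | a n. is_lim a})"
  by (simp add: M_omega1_def sub_mod_def)

lemma M_omega1_zero_mem: "mzero (M_omega1 z) \<in> mcar (M_omega1 z)"
  unfolding M_omega1_car M_omega1_ops by (rule mspan.zero)

lemma M_omega1_add_mem: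
  "x \<in> mcar (M_omega1 z) \<Longrightarrow> y \<in> mcar (M_omega1 z) \<Longrightarrow> madd (M_omega1 z) x y \<in> mcar (M_omega1 z)"
  unfolding M_omega1_car M_omega1_ops by (rule mspan.add)

lemma M_omega1_act_mem:
  "x \<in> mcar (M_omega1 z) \<Longrightarrow> kq r \<Longrightarrow> mact (M_omega1 z) x r \<in> mcar (M_omega1 z)"
  unfolding M_omega1_car M_omega1_ops by (rule mspan.act)

lemma M_omega1_minus_mem:
  assumes "f \<in> mcar F_mod" "cls z f \<in> mcar (M_omega1 z)"
  shows "cls z (\<lambda>xi n p. - f xi n p) \<in> mcar (M_omega1 z)"
proof -
  have "madd (quot_mod F_mod (I_sub z)) (cls z f) (cls z (\<lambda>xi n p. - f xi n p))
      = mzero (quot_mod F_mod (I_sub z))"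
    by (simp add: quot_mod_I_sub_ops)
  moreover have "cls z (\<lambda>xi n p. - f xi n p) \<in> mcar (quot_mod F_mod (I_sub z))"
    using F_mod_minus_mem[OF assms(1)] by (simp add: quot_mod_def)
  ultimately show ?thesis
    using assms(2) unfolding M_omega1_car by (blast intro: mspan.neg)
qed

lemma M_omega1_lim_gen_mem: "is_lim a \<Longrightarrow> cls z (eF a n) \<in> mcar (M_omega1 z)"
  unfolding M_omega1_car by (rule mspan.gen) blast

lemma M_omega1_cls_rep:
  "m \<in> mcar (M_omega1 z) \<Longrightarrow> \<exists>f\<in>mcar F_mod. m = cls z f"
  unfolding M_omega1_car
proof (induction rule: mspan.induct)
  case (gen s)
  then show ?case using eF_mem_F_mod by blast
next
  case zero
  then show ?case using F_mod_zero_mem quot_mod_I_sub_ops(2) by blast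
next
  case (add x y)
  then obtain f g where "f \<in> mcar F_mod" "x = cls z f" "g \<in> mcar F_mod" "y = cls z g"
    by blast
  then show ?case
    using quot_mod_I_sub_ops(1)[of z f g] F_mod_add_mem[of f g] by auto
next
  case (neg x y)
  then show ?case by (auto simp: quot_mod_def)
next
  case (act x r)
  then obtain f where "f \<in> mcar F_mod" "x = cls z f"
    by blast
  then show ?case
    using quot_mod_I_sub_ops(3)[OF act.hyps(2), of z f] F_mod_act_mem[OF _ act.hyps(2), of f] by auto
qed

lemma M_omega1_ladder_relation:
  assumes "is_lim a"
  shows "madd (M_omega1 z) (cls z (eF (z a n) n)) (mact (M_omega1 z) (cls z (eF a (Suc n))) (kq_a n))
    = cls z (eF a n)"
proof -
  let ?g = "\<lambda>xi k p. eF (z a n) n xi k p + kq_mult (eF a (Suc n) xi k) (kq_a n) p"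
  have "madd (M_omega1 z) (cls z (eF (z a n) n)) (mact (M_omega1 z) (cls z (eF a (Suc n))) (kq_a n))
      = cls z ?g"
    by (simp add: M_omega1_add M_omega1_act)
  also have "\<dots> = cls z (\<lambda>xi k p. ?g xi k p + (\<lambda>xi k p. - rel_gen z a n xi k p) xi k p)"
    by (rule cls_add_I_sub[OF I_sub_minus[OF rel_gen_mem_I_sub[OF assms]], symmetric])
  also have "(\<lambda>xi k p. ?g xi k p + (\<lambda>xi k p. - rel_gen z a n xi k p) xi k p) = eF a n"
    by (simp add: rel_gen_def fun_eq_iff)
  finally show ?thesis .
qed

lemma M_omega1_ladder_gen_mem:
  assumes "is_lim a"
  shows "cls z (eF (z a n) n) \<in> mcar (M_omega1 z)"
proof -
  let ?h = "\<lambda>xi k p. eF a n xi k p + kq_mult (eF a (Suc n) xi k) (\<lambda>p. - kq_a n p) p"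
  have "madd (M_omega1 z) (cls z (eF a n)) (mact (M_omega1 z) (cls z (eF a (Suc n))) (\<lambda>p. - kq_a n p))
      \<in> mcar (M_omega1 z)"
    by (intro M_omega1_add_mem M_omega1_act_mem M_omega1_lim_gen_mem[OF assms] kq_minus kq_kq_a)
  also have "madd (M_omega1 z) (cls z (eF a n)) (mact (M_omega1 z) (cls z (eF a (Suc n))) (\<lambda>p. - kq_a n p))
      = cls z ?h"
    by (simp add: M_omega1_add M_omega1_act kq_minus)
  also have "\<dots> = cls z (\<lambda>xi k p. ?h xi k p + rel_gen z a n xi k p)"
    by (rule cls_add_I_sub[OF rel_gen_mem_I_sub[OF assms], symmetric])
  also have "(\<lambda>xi k p. ?h xi k p + rel_gen z a n xi k p) = eF (z a n) n"
    by (simp add: rel_gen_def kq_mult_minus_right fun_eq_iff)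
  finally show ?thesis .
qed

section \<open>The extension of M_omega1 by N\<close>

type_synonym ('w, 'k) ext_el = "('w \<Rightarrow> 'k kqel) \<times> ('w \<Rightarrow> nat \<Rightarrow> 'k kqel) set"

definition ext_car :: "('w::wellorder \<Rightarrow> nat \<Rightarrow> 'w) \<Rightarrow> ('w, 'k::comm_ring_1) ext_el set" where
  "ext_car z = {e. snd e \<in> mcar (M_omega1 z) \<and>
     (\<exists>f\<in>mcar F_mod. snd e = cls z f \<and> (\<lambda>xi p. fst e xi p - H_map f xi p) \<in> mcar DSum_KQ)}"

definition ext_mod :: "('w::wellorder \<Rightarrow> nat \<Rightarrow> 'w) \<Rightarrow> (('w, 'k::comm_ring_1) ext_el, 'k) kqmod" where
  "ext_mod z = \<lparr>mcar = ext_car z,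
     madd = (\<lambda>e e'. (\<lambda>xi p. fst e xi p + fst e' xi p, madd (M_omega1 z) (snd e) (snd e'))),
     mzero = (\<lambda>_ _. 0, mzero (M_omega1 z)),
     mact = (\<lambda>e r. (\<lambda>xi. kq_mult (fst e xi) r, mact (M_omega1 z) (snd e) r))\<rparr>"

lemma ext_mod_simps [simp]:
  "mcar (ext_mod z) = ext_car z"
  "madd (ext_mod z) e e' = (\<lambda>xi p. fst e xi p + fst e' xi p, madd (M_omega1 z) (snd e) (snd e'))"
  "mzero (ext_mod z) = (\<lambda>_ _. 0, mzero (M_omega1 z))"
  "mact (ext_mod z) e r = (\<lambda>xi. kq_mult (fst e xi) r, mact (M_omega1 z) (snd e) r)"
  by (simp_all add: ext_mod_def)

lemma ext_carI:
  assumes "cls z f \<in> mcar (M_omega1 z)" "f \<in> mcar F_mod"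
    and "(\<lambda>xi p. x xi p - H_map f xi p) \<in> mcar DSum_KQ"
  shows "(x, cls z f) \<in> ext_car z"
  using assms unfolding ext_car_def by auto

lemma ext_carE:
  assumes "e \<in> ext_car z"
  obtains f where "snd e \<in> mcar (M_omega1 z)" "f \<in> mcar F_mod" "snd e = cls z f"
    "(\<lambda>xi p. fst e xi p - H_map f xi p) \<in> mcar DSum_KQ"
  using assms unfolding ext_car_def by blast

text \<open>The defining condition of the extension does not depend on the representative f,
  because H maps I into N.\<close>

lemma ext_car_diff_mem:
  assumes "is_ladder z" "e \<in> ext_car z" "snd e = cls z g"
  shows "(\<lambda>xi p. fst e xi p - H_map g xi p) \<in> mcar DSum_KQ"
proof -
  obtain f where f: "snd e = cls z f" "(\<lambda>xi p. fst e xi p - H_map f xi p) \<in> mcar DSum_KQ"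
    using assms(2) by (rule ext_carE)
  obtain y where y: "y \<in> I_sub z" "g = (\<lambda>xi n p. f xi n p + y xi n p)"
    using cls_eqD[OF trans[OF f(1)[symmetric] assms(3)]] by blast
  have y_N: "H_map y \<in> mcar DSum_KQ"
    using y(1) I_sub_H_finite[OF assms(1)] by (auto simp: H_finite_def)
  have "(\<lambda>xi p. fst e xi p - H_map g xi p) = (\<lambda>xi p. fst e xi p - H_map f xi p - H_map y xi p)"
    unfolding y(2) H_map_add by (simp add: algebra_simps)
  then show ?thesis
    using DSum_KQ_diff_mem[OF f(2) y_N] by simp
qed

lemma ext_incl_mem: "x \<in> mcar DSum_KQ \<Longrightarrow> (x, mzero (M_omega1 z)) \<in> ext_car z"
  using M_omega1_zero_mem[of z] unfolding M_omega1_zero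
  by (intro ext_carI) (simp_all add: F_mod_zero_mem H_map_zero)

lemma ext_add_mem:
  assumes "e \<in> ext_car z" "e' \<in> ext_car z"
  shows "madd (ext_mod z) e e' \<in> ext_car z"
proof -
  obtain f where f: "snd e \<in> mcar (M_omega1 z)" "f \<in> mcar F_mod" "snd e = cls z f"
      "(\<lambda>xi p. fst e xi p - H_map f xi p) \<in> mcar DSum_KQ"
    using assms(1) by (rule ext_carE)
  obtain f' where f': "snd e' \<in> mcar (M_omega1 z)" "f' \<in> mcar F_mod" "snd e' = cls z f'"
      "(\<lambda>xi p. fst e' xi p - H_map f' xi p) \<in> mcar DSum_KQ"
    using assms(2) by (rule ext_carE)
  have "(\<lambda>xi p. fst e xi p + fst e' xi p - H_map (\<lambda>xi n p. f xi n p + f' xi n p) xi p)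
      = (\<lambda>xi p. (\<lambda>xi p. fst e xi p - H_map f xi p) xi p + (\<lambda>xi p. fst e' xi p - H_map f' xi p) xi p)"
    unfolding H_map_add by (simp add: algebra_simps)
  then have "(\<lambda>xi p. fst e xi p + fst e' xi p, cls z (\<lambda>xi n p. f xi n p + f' xi n p)) \<in> ext_car z"
    using M_omega1_add_mem[OF f(1) f'(1)] DSum_KQ_add_mem[OF f(4) f'(4)] F_mod_add_mem[OF f(2) f'(2)]
    by (intro ext_carI) (simp_all add: f(3) f'(3) M_omega1_add)
  then show ?thesis
    by (simp add: f(3) f'(3) M_omega1_add)
qed

lemma ext_act_mem:
  assumes "e \<in> ext_car z" "kq r"
  shows "mact (ext_mod z) e r \<in> ext_car z"
proof -
  obtain f where f: "snd e \<in> mcar (M_omega1 z)" "f \<in> mcar F_mod" "snd e = cls z f"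
      "(\<lambda>xi p. fst e xi p - H_map f xi p) \<in> mcar DSum_KQ"
    using assms(1) by (rule ext_carE)
  have "(\<lambda>xi p. kq_mult (fst e xi) r p - H_map (\<lambda>xi n. kq_mult (f xi n) r) xi p)
      = (\<lambda>xi. kq_mult ((\<lambda>xi p. fst e xi p - H_map f xi p) xi) r)"
    unfolding H_map_act by (simp add: kq_mult_diff_left)
  then have "(\<lambda>xi. kq_mult (fst e xi) r, cls z (\<lambda>xi n. kq_mult (f xi n) r)) \<in> ext_car z"
    using M_omega1_act_mem[OF f(1) assms(2)] DSum_KQ_act_mem[OF f(4) assms(2)]
      F_mod_act_mem[OF f(2) assms(2)]
    by (intro ext_carI) (simp_all add: f(3) M_omega1_act[OF assms(2)])
  then show ?thesis
    by (simp add: f(3) M_omega1_act[OF assms(2)])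
qed

lemma ext_minus_mem:
  assumes "e \<in> ext_car z"
  shows "\<exists>e'\<in>ext_car z. madd (ext_mod z) e e' = mzero (ext_mod z)"
proof -
  obtain f where f: "snd e \<in> mcar (M_omega1 z)" "f \<in> mcar F_mod" "snd e = cls z f"
      "(\<lambda>xi p. fst e xi p - H_map f xi p) \<in> mcar DSum_KQ"
    using assms by (rule ext_carE)
  let ?e' = "(\<lambda>xi p. - fst e xi p, cls z (\<lambda>xi n p. - f xi n p))"
  have "(\<lambda>xi p. - fst e xi p - H_map (\<lambda>xi n p. - f xi n p) xi p)
      = (\<lambda>xi p. - (\<lambda>xi p. fst e xi p - H_map f xi p) xi p)"
    unfolding H_map_minus by simp
  then have "?e' \<in> ext_car z"
    using M_omega1_minus_mem[OF f(2)] f DSum_KQ_minus_mem[OF f(4)] F_mod_minus_mem[OF f(2)]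
    by (intro ext_carI) auto
  moreover have "madd (ext_mod z) e ?e' = mzero (ext_mod z)"
    by (simp add: f(3) M_omega1_add M_omega1_zero)
  ultimately show ?thesis by blast
qed

lemma ext_unital:
  assumes "e \<in> ext_car z"
  shows "\<exists>V. finite V \<and> mact (ext_mod z) e (kq_idem V) = e"
proof -
  obtain f where f: "f \<in> mcar F_mod" "snd e = cls z f"
      "(\<lambda>xi p. fst e xi p - H_map f xi p) \<in> mcar DSum_KQ"
    using assms by (rule ext_carE)
  define d where "d = (\<lambda>xi p. fst e xi p - H_map f xi p)"
  define V where "V = {u. \<exists>xi n s. f xi n (s,u) \<noteq> 0} \<union> {u. \<exists>xi s. d xi (s,u) \<noteq> 0}"
  have V: "finite V"
    unfolding V_def d_def using F_mod_targets_finite[OF f(1)] DSum_KQ_targets_finite[OF f(3)] by simp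
  have f_V: "kq_mult (f xi n) (kq_idem V) = f xi n" for xi n
    using f(1) unfolding mem_F_mod_iff by (intro kq_mult_idem_right) (auto simp: V_def)
  have d_V: "kq_mult (d xi) (kq_idem V) = d xi" for xi
    using f(3) unfolding mem_DSum_KQ_iff d_def[symmetric] by (auto simp: V_def intro!: kq_mult_idem_right)
  have "(\<lambda>xi. kq_mult (H_map f xi) (kq_idem V)) = H_map f"
    unfolding H_map_act[symmetric] by (simp add: f_V)
  then have H_V: "kq_mult (H_map f xi) (kq_idem V) = H_map f xi" for xi
    by (rule fun_cong[where x=xi, simplified])
  have "fst e = (\<lambda>xi p. H_map f xi p + d xi p)"
    by (simp add: d_def)
  then have "(\<lambda>xi. kq_mult (fst e xi) (kq_idem V)) = fst e"
    using H_V d_V by (simp add: kq_mult_add_left)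
  moreover have "mact (M_omega1 z) (snd e) (kq_idem V) = snd e"
    by (simp add: f(2) f_V M_omega1_act[OF kq_kq_idem[OF V]])
  ultimately show ?thesis
    using V by (auto simp: prod_eq_iff)
qed

lemma ext_car_cls: "e \<in> ext_car z \<Longrightarrow> \<exists>f. snd e = cls z f"
  unfolding ext_car_def by blast

lemma ext_mod_add_laws:
  assumes "x \<in> ext_car z" "y \<in> ext_car z" "w \<in> ext_car z"
  shows "madd (ext_mod z) (madd (ext_mod z) x y) w = madd (ext_mod z) x (madd (ext_mod z) y w)"
    and "madd (ext_mod z) x y = madd (ext_mod z) y x"
    and "madd (ext_mod z) (mzero (ext_mod z)) x = x"
proof -
  obtain f g h where "snd x = cls z f" "snd y = cls z g" "snd w = cls z h"
    using ext_car_cls assms by metis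
  then show "madd (ext_mod z) (madd (ext_mod z) x y) w = madd (ext_mod z) x (madd (ext_mod z) y w)"
    and "madd (ext_mod z) x y = madd (ext_mod z) y x"
    and "madd (ext_mod z) (mzero (ext_mod z)) x = x"
    by (simp_all add: M_omega1_add M_omega1_zero add_ac prod_eq_iff)
qed

lemma ext_mod_act_add:
  assumes "x \<in> ext_car z" "y \<in> ext_car z" "kq r"
  shows "mact (ext_mod z) (madd (ext_mod z) x y) r
    = madd (ext_mod z) (mact (ext_mod z) x r) (mact (ext_mod z) y r)"
proof -
  obtain f g where "snd x = cls z f" "snd y = cls z g"
    using ext_car_cls assms by metis
  then show ?thesis
    by (simp add: M_omega1_add M_omega1_act[OF assms(3)] kq_mult_add_left)
qed

lemma ext_mod_act_laws:
  assumes "x \<in> ext_car z" "kq r" "kq s"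
  shows "mact (ext_mod z) x (\<lambda>p. r p + s p) = madd (ext_mod z) (mact (ext_mod z) x r) (mact (ext_mod z) x s)"
    and "mact (ext_mod z) (mact (ext_mod z) x r) s = mact (ext_mod z) x (kq_mult r s)"
proof -
  obtain f where "snd x = cls z f"
    using ext_car_cls assms by metis
  then show "mact (ext_mod z) x (\<lambda>p. r p + s p) = madd (ext_mod z) (mact (ext_mod z) x r) (mact (ext_mod z) x s)"
    and "mact (ext_mod z) (mact (ext_mod z) x r) s = mact (ext_mod z) x (kq_mult r s)"
    using assms(2,3)
    by (simp_all add: M_omega1_add M_omega1_act kq_add kq_kq_mult kq_mult_add_right kq_mult_assoc)
qed

lemma ext_mod_is_kqmod: "is_kqmod (ext_mod z)"
proof -
  have "mzero (ext_mod z) \<in> ext_car z"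
    using ext_incl_mem[OF DSum_KQ_zero_mem] by simp
  then show ?thesis
    unfolding is_kqmod_def ext_mod_simps(1)
    by (intro conjI ballI allI impI)
      (assumption | rule ext_add_mem ext_act_mem ext_minus_mem ext_unital
        ext_mod_add_laws ext_mod_act_add ext_mod_act_laws; assumption)+
qed

section \<open>The extension is short exact and does not split\<close>

lemma ext_incl_hom: "kq_hom DSum_KQ (ext_mod z) (\<lambda>x. (x, mzero (M_omega1 z)))"
  unfolding kq_hom_def using ext_incl_mem
  by (auto simp: M_omega1_zero M_omega1_add M_omega1_act)

lemma ext_proj_hom: "kq_hom (ext_mod z) (M_omega1 z) snd"
  unfolding kq_hom_def by (auto elim: ext_carE)

lemma ext_proj_surj: "snd ` mcar (ext_mod z) = mcar (M_omega1 z)"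
proof (intro equalityI subsetI)
  fix m assume "m \<in> mcar (M_omega1 z)"
  moreover obtain f where "f \<in> mcar F_mod" "m = cls z f"
    using M_omega1_cls_rep[OF \<open>m \<in> mcar (M_omega1 z)\<close>] by blast
  ultimately have "(H_map f, m) \<in> ext_car z"
    by (auto intro: ext_carI simp: DSum_KQ_zero_mem)
  then show "m \<in> snd ` mcar (ext_mod z)"
    by force
qed (auto elim: ext_carE)

lemma ext_proj_kernel:
  assumes "is_ladder z"
  shows "(\<lambda>x. (x, mzero (M_omega1 z))) ` mcar DSum_KQ = {e \<in> mcar (ext_mod z). snd e = mzero (M_omega1 z)}"
proof (intro equalityI subsetI)
  fix e assume "e \<in> {e \<in> mcar (ext_mod z). snd e = mzero (M_omega1 z)}"
  then have "e \<in> ext_car z" "snd e = cls z (\<lambda>_ _ _. 0)"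
    by (auto simp: M_omega1_zero)
  then have "fst e \<in> mcar DSum_KQ"
    using ext_car_diff_mem[OF assms] by (fastforce simp: H_map_zero)
  moreover have "e = (fst e, mzero (M_omega1 z))"
    using \<open>snd e = cls z (\<lambda>_ _ _. 0)\<close> by (simp add: M_omega1_zero prod_eq_iff)
  ultimately show "e \<in> (\<lambda>x. (x, mzero (M_omega1 z))) ` mcar DSum_KQ"
    by blast
qed (auto intro: ext_incl_mem)

lemma ext_section_diff_mem:
  fixes s :: "('w::wellorder \<Rightarrow> nat \<Rightarrow> 'k::comm_ring_1 kqel) set \<Rightarrow> ('w, 'k) ext_el"
  assumes "is_ladder z" and "kq_hom (M_omega1 z) (ext_mod z) s"
    and "\<forall>m\<in>mcar (M_omega1 z). snd (s m) = m" and "cls z f \<in> mcar (M_omega1 z)"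
  shows "(\<lambda>xi p. fst (s (cls z f)) xi p - H_map f xi p) \<in> mcar DSum_KQ"
proof -
  have "s (cls z f) \<in> ext_car z"
    using assms(2,4) unfolding kq_hom_def by auto
  moreover have "snd (s (cls z f)) = cls z f"
    using assms(3,4) by blast
  ultimately show ?thesis
    by (rule ext_car_diff_mem[OF assms(1)])
qed

lemma ext_hom_ladder_relation:
  fixes s :: "('w::wellorder \<Rightarrow> nat \<Rightarrow> 'k::comm_ring_1 kqel) set \<Rightarrow> ('w, 'k) ext_el"
  assumes hom: "kq_hom (M_omega1 z) (ext_mod z) s" and a: "is_lim a"
  shows "fst (s (cls z (eF a n))) = (\<lambda>xi p. fst (s (cls z (eF (z a n) n))) xi p
    + kq_mult (fst (s (cls z (eF a (Suc n)))) xi) (kq_a n) p)"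
proof -
  have hom_add: "s (madd (M_omega1 z) m m') = madd (ext_mod z) (s m) (s m')"
    if "m \<in> mcar (M_omega1 z)" "m' \<in> mcar (M_omega1 z)" for m m'
    using hom that unfolding kq_hom_def by blast
  have hom_act: "s (mact (M_omega1 z) m r) = mact (ext_mod z) (s m) r"
    if "m \<in> mcar (M_omega1 z)" "kq r" for m r
    using hom that unfolding kq_hom_def by blast
  have "s (cls z (eF a n)) = s (madd (M_omega1 z) (cls z (eF (z a n) n))
      (mact (M_omega1 z) (cls z (eF a (Suc n))) (kq_a n)))"
    by (simp add: M_omega1_ladder_relation[OF a])
  also have "\<dots> = madd (ext_mod z) (s (cls z (eF (z a n) n)))
      (s (mact (M_omega1 z) (cls z (eF a (Suc n))) (kq_a n)))"
    by (intro hom_add M_omega1_ladder_gen_mem M_omega1_act_mem M_omega1_lim_gen_mem a kq_kq_a)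
  also have "s (mact (M_omega1 z) (cls z (eF a (Suc n))) (kq_a n))
      = mact (ext_mod z) (s (cls z (eF a (Suc n)))) (kq_a n)"
    by (intro hom_act M_omega1_lim_gen_mem a kq_kq_a)
  finally show ?thesis
    by simp
qed

lemma ext_not_split:
  fixes z :: "'w::wellorder \<Rightarrow> nat \<Rightarrow> 'w"
  assumes unc: "uncountable (UNIV :: 'w set)" and cnt: "\<forall>x::'w. countable {y. y < x}"
    and lad: "is_ladder z"
    and hom: "kq_hom (M_omega1 z) (ext_mod z :: (('w, 'k::comm_ring_1) ext_el, 'k) kqmod) s"
    and sec: "\<forall>m\<in>mcar (M_omega1 z). snd (s m) = m"
  shows False
proof -
  define y where "y g n = fst (s (cls z (eF g n)))" for g n
  define S where "S g n = (if finite {xi. y g n xi \<noteq> (\<lambda>_. 0)} then {xi. y g n xi \<noteq> (\<lambda>_. 0)} else {})"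
    for g n
  have "finite (S g n)" for g n
    by (simp add: S_def)
  then obtain a where a: "is_lim a" "\<forall>g<a. \<forall>n. a \<notin> S g n"
    using exists_lim_closure_point[OF unc cnt] by blast
  have ladder_zero: "y (z a n) n a = (\<lambda>_. 0)" for n
  proof -
    have "y (z a n) n \<in> mcar DSum_KQ"
      using ext_section_diff_mem[OF lad hom sec M_omega1_ladder_gen_mem[OF a(1)]]
      by (simp add: y_def H_map_eF_not_lim[OF ladder_not_is_lim[OF lad a(1)]])
    then have "S (z a n) n = {xi. y (z a n) n xi \<noteq> (\<lambda>_. 0)}"
      by (simp add: S_def mem_DSum_KQ_iff)
    then show ?thesis
      using a(2) ladder_less[OF lad a(1)] by blast
  qed
  have "y a n a = kq_mult (y a (Suc n) a) (kq_a n)" for n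
    using ext_hom_ladder_relation[OF hom a(1), of n] ladder_zero[of n]
    by (simp add: y_def fun_eq_iff)
  then have "y a 0 a (t,0) = 0" for t
    using arrow_divisible_vanishes[of "\<lambda>n. y a n a"] by blast
  moreover have "kq (\<lambda>p. y a 0 a p - H_map (eF a 0) a p)"
    using ext_section_diff_mem[OF lad hom sec M_omega1_lim_gen_mem[OF a(1)]]
    unfolding mem_DSum_KQ_iff y_def by blast
  ultimately show False
    using not_kq_diff_all_paths_e0 unfolding H_map_eF_lim[OF a(1)] by blast
qed

theorem claim2p3:
  fixes z :: "'w::wellorder \<Rightarrow> nat \<Rightarrow> 'w"
  assumes "uncountable (UNIV :: 'w set)"
    and "\<forall>x::'w. countable {y. y < x}"
    and "\<forall>p :: 'k::field poly. degree p > 0 \<longrightarrow> (\<exists>x. poly p x = 0)"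
    and "is_ladder z"
  shows "Ext1_nonzero (M_omega1 z :: (('w \<Rightarrow> nat \<Rightarrow> 'k kqel) set, 'k) kqmod)
                      (DSum_KQ :: ('w \<Rightarrow> 'k kqel, 'k) kqmod)"
  unfolding Ext1_nonzero_def
proof (intro exI conjI)
  show "is_kqmod (ext_mod z :: (('w, 'k) ext_el, 'k) kqmod)"
    by (rule ext_mod_is_kqmod)
  show "kq_hom DSum_KQ (ext_mod z) (\<lambda>x. (x, mzero (M_omega1 z)))"
    by (rule ext_incl_hom)
  show "inj_on (\<lambda>x. (x, mzero (M_omega1 z))) (mcar DSum_KQ)"
    by (simp add: inj_on_def)
  show "kq_hom (ext_mod z) (M_omega1 z) snd"
    by (rule ext_proj_hom)
  show "snd ` mcar (ext_mod z) = mcar (M_omega1 z)"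
    by (rule ext_proj_surj)
  show "(\<lambda>x. (x, mzero (M_omega1 z))) ` mcar DSum_KQ = {e \<in> mcar (ext_mod z). snd e = mzero (M_omega1 z)}"
    by (rule ext_proj_kernel[OF assms(4)])
  show "\<not> (\<exists>s. kq_hom (M_omega1 z) (ext_mod z) s \<and> (\<forall>m\<in>mcar (M_omega1 z). snd (s m) = m))"
    using ext_not_split[OF assms(1,2,4)] by blast
qed

end
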